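(* Let $\pi\in RC(n)$. (1) If $n\ge 3$ is odd and $\pi$ is alternating, then $\{\pi_1,\pi_n\}=\{\frac{n-1}{2},\frac{n+1}{2}\}$, $\{\pi_j : 1<j<n,\ j\text{ odd}\}=\{1,\dots,\frac{n-3}{2}\}$, and $\{\pi_j: 1<j<n,\ j\text{ even}\}=\{\frac{n+3}{2},\dots,n\}$. (2) If $n\ge 3$ is odd and $\pi$ is reverse-alternating, then $\{\pi_1,\pi_n\}=\{\frac{n+1}{2},\frac{n+3}{2}\}$, $\{\pi_j: 1<j<n,\ j\text{ odd}\}=\{\frac{n+5}{2},\dots,n\}$, and $\{\pi_j: 1<j<n,\ j\text{ even}\}=\{1,\dots,\frac{n-1}{2}\}$. (3) If $n\ge 2$ is even and $\pi$ is alternating, then $\{\pi_1,\pi_n\}=\{\frac n2,\frac n2+1\}$, $\{\pi_j: 1<j<n,\ j\text{ odd}\}=\{1,\dots,\frac n2-1\}$, and $\{\pi_j: 1<j<n,\ j\text{ even}\}=\{\frac n2+2,\dots,n\}$. (4) If $n\ge 2$ is even and $\pi$ is reverse-alternating, then $\{\pi_1,\pi_n\}=\{\frac n2,\frac n2+1\}$, $\{\pi_j: 1<j<n,\ j\text{ odd}\}=\{\frac n2+2,\dots,n\}$, and $\{\pi_j: 1<j<n,\ j\text{ even}\}=\{1,\dots,\frac n2-1\}$. (Here $\{a,\dots,b\}$ with $a>b$ denotes the empty set.)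
   Context: Permutations of $[n]=\{1,\dots,n\}$ are written in one-line notation $\pi=(\pi_1,\dots,\pi_n)$; $S_n$ is the set of all of them. $\pi$ is alternating if $\pi_1<\pi_2>\pi_3<\cdots$ and reverse-alternating if $\pi_1>\pi_2<\pi_3>\cdots$. For a sequence $\tau=(\tau_1,\dots,\tau_m)$ of distinct numbers with $m\ge 2$, let $i(\tau)$ be the number of maximal increasing runs of consecutive entries of length at least $2$, and $d(\tau)$ the number of maximal decreasing runs of consecutive entries of length at least $2$; set $id(\tau)=i(\tau)+d(\tau)$. Equivalently, $id(\tau)=1+\#\{k: 2\le k\le m-1,\ (\tau_k-\tau_{k-1})(\tau_{k+1}-\tau_k)<0\}$. For $\pi\in S_n$, let $X(\pi)$ be the collection of all subsequences $\tau=(\pi_{j_1},\dots,\pi_{j_m})$ with $j_1<\dots<j_m$ and $m\ge 3$, and $t(\pi)=\sum_{\tau\in X(\pi)} id(\tau)$. Define $RC(n)=\{\pi\in S_n : t(\pi)=\max_{\sigma\in S_n} t(\sigma)\}$. *)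

theory Defs
  imports Main
begin

text \<open>Permutations of [n] in one-line notation, as lists: the entry pi_j is xs ! (j-1).\<close>
definition Sn :: "nat \<Rightarrow> nat list set" where
  "Sn n = {xs. distinct xs \<and> set xs = {1..n}}"

definition alternating :: "nat list \<Rightarrow> bool" where
  "alternating xs \<longleftrightarrow> (\<forall>k. k + 1 < length xs \<longrightarrow>
      (if even k then xs ! k < xs ! (k+1) else xs ! k > xs ! (k+1)))"

definition rev_alternating :: "nat list \<Rightarrow> bool" where
  "rev_alternating xs \<longleftrightarrow> (\<forall>k. k + 1 < length xs \<longrightarrow>
      (if even k then xs ! k > xs ! (k+1) else xs ! k < xs ! (k+1)))"

definition idr :: "nat list \<Rightarrow> nat" where
  "idr ts = 1 + card {k. 1 \<le> k \<and> k + 1 < length ts \<and>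
      (int (ts ! k) - int (ts ! (k-1))) * (int (ts ! (k+1)) - int (ts ! k)) < 0}"

definition tstat :: "nat list \<Rightarrow> nat" where
  "tstat xs = (\<Sum>J\<in>{J. J \<subseteq> {0..<length xs} \<and> card J \<ge> 3}. idr (nths xs J))"

definition RC :: "nat \<Rightarrow> nat list set" where
  "RC n = {xs \<in> Sn n. tstat xs = Max (tstat ` Sn n)}"

end

theory Submission
  imports Defs
begin

text \<open>A triple of positions a < b < c is consecutive in exactly 2^a * 2^(n-1-c) index sets, so up
  to an additive constant t(\<pi>) is the number of turning triples weighted by 2^a * 2^(n-1-c).
  Exchanging two entries that hold adjacent values k, k+1 at positions lo < hi flips the turn
  status of the triples (a, lo, hi) and (lo, hi, c) and of no others, and on each side the
  triple next to lo, hi outweighs all the others together. So in a maximizer whose interior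
  entries are all peaks or valleys, an endpoint never carries a smaller value than a valley and a
  peak never a smaller value than an endpoint or a valley: the valleys carry the smallest values,
  the peaks the largest ones, and the two endpoints the two values in between.\<close>

section \<open>Turning triples and the statistic t\<close>

definition is_turn :: "nat list \<Rightarrow> nat \<Rightarrow> nat \<Rightarrow> nat \<Rightarrow> bool" where
  "is_turn xs a b c \<longleftrightarrow> (int (xs!b) - int (xs!a)) * (int (xs!c) - int (xs!b)) < 0"

definition consecutive_in :: "nat set \<Rightarrow> nat \<Rightarrow> nat \<Rightarrow> nat \<Rightarrow> bool" where
  "consecutive_in J a b c \<longleftrightarrow> a \<in> J \<and> c \<in> J \<and> J \<inter> {a<..<c} = {b}"

lemma nths_eq_map_filter: "nths xs A = map ((!) xs) (filter (\<lambda>i. i \<in> A) [0..<length xs])"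
proof (induction xs rule: rev_induct)
  case (snoc x xs)
  have "map ((!) (xs @ [x])) (filter (\<lambda>i. i \<in> A) [0..<length xs])
      = map ((!) xs) (filter (\<lambda>i. i \<in> A) [0..<length xs])"
    by (rule map_cong) (auto simp: nth_append)
  with snoc show ?case by (simp add: nths_append)
qed simp

lemma sorted_wrt_less_nth_less_iff:
  fixes js :: "'a::linorder list"
  assumes "sorted_wrt (<) js" "i < length js" "j < length js"
  shows "js!i < js!j \<longleftrightarrow> i < j"
  using sorted_wrt_nth_less[OF assms(1)] assms
  by (cases i j rule: linorder_cases) (auto dest: less_asym)

lemma sorted_wrt_less_inter_greaterThanLessThan:
  fixes js :: "'a::linorder list"
  assumes "sorted_wrt (<) js" "i < length js" "j < length js"
  shows "set js \<inter> {js!i<..<js!j} = (!) js ` {i<..<j}"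
  using assms(2,3) sorted_wrt_less_nth_less_iff[OF assms(1)]
  by (auto simp: in_set_conv_nth) (metis less_trans)

lemma bij_betw_consecutive_in_sorted:
  assumes js: "sorted_wrt (<) js"
  shows "bij_betw (\<lambda>k. (js!(k-1), js!k, js!(k+1)))
           {k. 0 < k \<and> k+1 < length js} {(a,b,c). consecutive_in (set js) a b c}"
proof -
  have dist: "distinct js" using js strict_sorted_iff by blast
  note between = sorted_wrt_less_inter_greaterThanLessThan[OF js]
  show ?thesis
  proof (rule bij_betw_imageI)
    show "inj_on (\<lambda>k. (js!(k-1), js!k, js!(k+1))) {k. 0 < k \<and> k+1 < length js}"
    proof (rule inj_onI)
      fix k l assume "k \<in> {k. 0 < k \<and> k+1 < length js}" "l \<in> {k. 0 < k \<and> k+1 < length js}"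
        and "(js!(k-1), js!k, js!(k+1)) = (js!(l-1), js!l, js!(l+1))"
      then have "js!k = js!l" "k < length js" "l < length js" by auto
      with dist show "k = l" by (simp add: nth_eq_iff_index_eq)
    qed
    show "(\<lambda>k. (js!(k-1), js!k, js!(k+1))) ` {k. 0 < k \<and> k+1 < length js}
        = {(a,b,c). consecutive_in (set js) a b c}"
    proof (intro equalityI subsetI)
      fix t assume "t \<in> (\<lambda>k. (js!(k-1), js!k, js!(k+1))) ` {k. 0 < k \<and> k+1 < length js}"
      then obtain k where k: "0 < k" "k+1 < length js" "t = (js!(k-1), js!k, js!(k+1))" by auto
      have "{k-1<..<k+1} = {k}" using k by auto
      then show "t \<in> {(a,b,c). consecutive_in (set js) a b c}"
        using k between[of "k-1" "k+1"] by (simp add: consecutive_in_def)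
    next
      fix t assume "t \<in> {(a,b,c). consecutive_in (set js) a b c}"
      then obtain a b c where t: "t = (a,b,c)" and abc: "consecutive_in (set js) a b c" by auto
      then obtain i j where ij: "i < length js" "j < length js" "a = js!i" "c = js!j"
        by (auto simp: consecutive_in_def in_set_conv_nth)
      with abc between have "(!) js ` {i<..<j} = {b}" by (simp add: consecutive_in_def)
      moreover have "inj_on ((!) js) {i<..<j}"
        using dist ij by (intro inj_on_nth) auto
      ultimately have "card {i<..<j} = 1" by (metis card_image is_singleton_altdef is_singleton_def)
      then have "j = i + 2" by simp
      with \<open>(!) js ` {i<..<j} = {b}\<close> have "b = js!(i+1)" by auto
      with t ij \<open>j = i + 2\<close>
      show "t \<in> (\<lambda>k. (js!(k-1), js!k, js!(k+1))) ` {k. 0 < k \<and> k+1 < length js}"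
        by (intro image_eqI[where x="i+1"]) auto
    qed
  qed
qed

lemma idr_nths_eq_card_turns:
  assumes "J \<subseteq> {0..<length xs}"
  shows "idr (nths xs J) = 1 + card {(a,b,c). consecutive_in J a b c \<and> is_turn xs a b c}"
proof -
  define js where "js = filter (\<lambda>i. i \<in> J) [0..<length xs]"
  have js: "sorted_wrt (<) js" "set js = J"
    using assms by (auto simp: js_def sorted_wrt_filter)
  define K where "K = {k. 0 < k \<and> k+1 < length js \<and> is_turn xs (js!(k-1)) (js!k) (js!(k+1))}"
  have "nths xs J = map ((!) xs) js"
    by (simp add: nths_eq_map_filter js_def)
  then have "idr (nths xs J) = 1 + card K"
    unfolding idr_def K_def is_turn_def
    by (intro arg_cong[where f="\<lambda>S. 1 + card S"] Collect_cong) auto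
  moreover have "bij_betw (\<lambda>k. (js!(k-1), js!k, js!(k+1))) K
      {t \<in> {(a,b,c). consecutive_in J a b c}. case t of (a,b,c) \<Rightarrow> is_turn xs a b c}"
    unfolding K_def using bij_betw_Collect[OF bij_betw_consecutive_in_sorted[OF js(1)]] js(2)
    by simp
  moreover have "{t \<in> {(a,b,c). consecutive_in J a b c}. case t of (a,b,c) \<Rightarrow> is_turn xs a b c}
      = {(a,b,c). consecutive_in J a b c \<and> is_turn xs a b c}" by auto
  ultimately show ?thesis by (simp add: bij_betw_same_card)
qed

lemma bij_betw_consecutive_in_subsets:
  assumes "a < b" "b < c" "c < n"
  shows "bij_betw (\<lambda>(A, B). A \<union> {a,b,c} \<union> B) (Pow {..<a} \<times> Pow {c<..<n})
    {J. J \<subseteq> {0..<n} \<and> consecutive_in J a b c}"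
proof -
  define glue where "glue = (\<lambda>(A::nat set, B). A \<union> {a,b,c} \<union> B)"
  define cut where "cut = (\<lambda>J::nat set. (J \<inter> {..<a}, J \<inter> {c<..<n}))"
  have "bij_betw glue (Pow {..<a} \<times> Pow {c<..<n}) {J. J \<subseteq> {0..<n} \<and> consecutive_in J a b c}"
  proof (rule bij_betw_byWitness[where f'=cut])
    show "\<forall>P \<in> Pow {..<a} \<times> Pow {c<..<n}. cut (glue P) = P"
    proof clarify
      fix A B assume "A \<subseteq> {..<a}" "B \<subseteq> {c<..<n}"
      with assms have "(A \<union> {a,b,c} \<union> B) \<inter> {..<a} = A" "(A \<union> {a,b,c} \<union> B) \<inter> {c<..<n} = B"
        by auto
      then show "cut (glue (A, B)) = (A, B)" by (simp add: cut_def glue_def)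
    qed
    show "\<forall>J \<in> {J. J \<subseteq> {0..<n} \<and> consecutive_in J a b c}. glue (cut J) = J"
    proof clarify
      fix J assume J: "J \<subseteq> {0..<n}" "consecutive_in J a b c"
      then have abc: "{a,b,c} \<subseteq> J" and mid: "J \<inter> {a<..<c} = {b}"
        by (auto simp: consecutive_in_def)
      have "J \<subseteq> (J \<inter> {..<a}) \<union> {a,b,c} \<union> (J \<inter> {c<..<n})"
      proof
        fix x assume "x \<in> J"
        with J(1) mid show "x \<in> (J \<inter> {..<a}) \<union> {a,b,c} \<union> (J \<inter> {c<..<n})"
          by (cases x a rule: linorder_cases; cases x c rule: linorder_cases) auto
      qed
      with abc show "glue (cut J) = J"
        unfolding glue_def cut_def by auto
    qed
    show "glue ` (Pow {..<a} \<times> Pow {c<..<n}) \<subseteq> {J. J \<subseteq> {0..<n} \<and> consecutive_in J a b c}"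
    proof clarify
      fix A B assume AB: "A \<subseteq> {..<a}" "B \<subseteq> {c<..<n}"
      have "A \<inter> {a<..<c} = {}" "B \<inter> {a<..<c} = {}" "{a,b,c} \<inter> {a<..<c} = {b}"
        using AB assms by auto
      then have "(A \<union> {a,b,c} \<union> B) \<inter> {a<..<c} = {b}"
        by (simp only: Int_Un_distrib2 Un_empty_left Un_empty_right)
      moreover have "A \<union> {a,b,c} \<union> B \<subseteq> {0..<n}" using AB assms by auto
      ultimately show "glue (A, B) \<subseteq> {0..<n} \<and> consecutive_in (glue (A, B)) a b c"
        by (simp add: glue_def consecutive_in_def)
    qed
    show "cut ` {J. J \<subseteq> {0..<n} \<and> consecutive_in J a b c} \<subseteq> Pow {..<a} \<times> Pow {c<..<n}"
      by (auto simp: cut_def)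
  qed
  then show ?thesis by (simp add: glue_def)
qed

lemma card_subsets_consecutive_in:
  assumes "a < b" "b < c" "c < n"
  shows "card {J. J \<subseteq> {0..<n} \<and> consecutive_in J a b c} = 2^a * 2^(n-1-c)"
proof -
  have "card {J. J \<subseteq> {0..<n} \<and> consecutive_in J a b c} = card (Pow {..<a} \<times> Pow {c<..<n})"
    using bij_betw_consecutive_in_subsets[OF assms] by (simp add: bij_betw_same_card)
  also have "\<dots> = 2^a * 2^(n-1-c)"
    by (simp add: card_cartesian_product card_Pow)
  finally show ?thesis .
qed

definition increasing_triples :: "nat \<Rightarrow> (nat \<times> nat \<times> nat) set" where
  "increasing_triples n = {(a,b,c). a < b \<and> b < c \<and> c < n}"

definition turn_weight :: "nat list \<Rightarrow> nat" where
  "turn_weight xs = (\<Sum>(a,b,c) \<in> increasing_triples (length xs).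
      if is_turn xs a b c then 2^a * 2^(length xs - 1 - c) else 0)"

lemma finite_increasing_triples: "finite (increasing_triples n)"
  by (rule finite_subset[of _ "{..<n} \<times> {..<n} \<times> {..<n}"]) (auto simp: increasing_triples_def)

lemma consecutive_in_card_ge_3:
  assumes "finite J" "consecutive_in J a b c"
  shows "3 \<le> card J"
proof -
  have "{a,b,c} \<subseteq> J" "a < b" "b < c"
    using assms(2) by (auto simp: consecutive_in_def)
  then have "card {a,b,c} = 3" by simp
  with card_mono[OF assms(1) \<open>{a,b,c} \<subseteq> J\<close>] show ?thesis by simp
qed

lemma tstat_eq_card_add_turn_weight:
  "tstat xs = card {J. J \<subseteq> {0..<length xs} \<and> 3 \<le> card J} + turn_weight xs"
proof -
  define n where "n = length xs"
  define F where "F = {J. J \<subseteq> {0..<n} \<and> 3 \<le> card J}"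
  define S where "S = (\<lambda>J. {(a,b,c). consecutive_in J a b c \<and> is_turn xs a b c})"
  have finF: "finite F"
    unfolding F_def by (rule finite_subset[of _ "Pow {0..<n}"]) auto
  have S_sub: "S J \<subseteq> increasing_triples n" if "J \<in> F" for J
    using that by (auto simp: S_def F_def increasing_triples_def consecutive_in_def)
  have "tstat xs = (\<Sum>J\<in>F. 1 + card (S J))"
    unfolding tstat_def n_def[symmetric] F_def[symmetric]
    by (rule sum.cong) (auto simp: F_def S_def n_def idr_nths_eq_card_turns)
  also have "\<dots> = card F + (\<Sum>J\<in>F. \<Sum>t\<in>increasing_triples n. if t \<in> S J then 1 else 0)"
    using S_sub finite_increasing_triples
    by (simp add: sum.distrib sum.If_cases Int_absorb1 del: One_nat_def)
  also have "(\<Sum>J\<in>F. \<Sum>t\<in>increasing_triples n. if t \<in> S J then 1 else 0)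
      = (\<Sum>t\<in>increasing_triples n. card {J \<in> F. t \<in> S J})"
    by (subst sum.swap) (simp add: sum.If_cases finF Int_def)
  also have "\<dots> = turn_weight xs"
    unfolding turn_weight_def n_def[symmetric]
  proof (rule sum.cong[OF refl], clarify)
    fix a b c assume t: "(a,b,c) \<in> increasing_triples n"
    have "{J \<in> F. (a,b,c) \<in> S J}
        = (if is_turn xs a b c then {J. J \<subseteq> {0..<n} \<and> consecutive_in J a b c} else {})"
      by (auto simp: F_def S_def finite_subset intro: consecutive_in_card_ge_3)
    with t show "card {J \<in> F. (a,b,c) \<in> S J} = (if is_turn xs a b c then 2^a * 2^(n-1-c) else 0)"
      by (simp add: increasing_triples_def card_subsets_consecutive_in)
  qed
  finally show ?thesis unfolding F_def n_def .
qed

section \<open>Exchanging adjacent values\<close>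

lemma is_turn_iff_less:
  assumes "xs!a \<noteq> xs!b" "xs!b \<noteq> xs!c"
  shows "is_turn xs a b c \<longleftrightarrow> (xs!a < xs!b \<longleftrightarrow> xs!c < xs!b)"
  using assms unfolding is_turn_def mult_less_0_iff by auto

lemma not_is_turn_if_monotone:
  "(xs!a < xs!b \<and> xs!b < xs!c) \<or> (xs!c < xs!b \<and> xs!b < xs!a) \<Longrightarrow> \<not> is_turn xs a b c"
  by (auto simp: is_turn_def mult_less_0_iff)

lemma swap_adjacent_values_less_iff:
  assumes "distinct xs" "lo < length xs" "hi < length xs"
    and "xs!hi = Suc (xs!lo) \<or> xs!lo = Suc (xs!hi)"
    and "p < length xs" "q < length xs" "{p,q} \<noteq> {lo,hi}"
  shows "xs[lo := xs!hi, hi := xs!lo] ! p < xs[lo := xs!hi, hi := xs!lo] ! q \<longleftrightarrow> xs!p < xs!q"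
proof -
  have other: "r < length xs \<Longrightarrow> r \<noteq> lo \<Longrightarrow> r \<noteq> hi \<Longrightarrow> xs!r \<noteq> xs!lo \<and> xs!r \<noteq> xs!hi" for r
    using assms(1-3) by (simp add: nth_eq_iff_index_eq)
  show ?thesis
    using assms(2-7) other[of p] other[of q] by (auto simp: nth_list_update)
qed

lemma is_turn_swap_adjacent_values:
  assumes "distinct xs" "lo < hi" "hi < length xs"
    and "xs!hi = Suc (xs!lo) \<or> xs!lo = Suc (xs!hi)"
    and "a < b" "b < c" "c < length xs"
  shows "is_turn (xs[lo := xs!hi, hi := xs!lo]) a b c \<longleftrightarrow>
    (if (a,b) = (lo,hi) \<or> (b,c) = (lo,hi) then \<not> is_turn xs a b c else is_turn xs a b c)"
proof -
  define ys where "ys = xs[lo := xs!hi, hi := xs!lo]"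
  have "distinct ys" "length ys = length xs" using assms(1-3) by (simp_all add: ys_def)
  then have neq: "ys!a \<noteq> ys!b" "ys!b \<noteq> ys!c" "xs!a \<noteq> xs!b" "xs!b \<noteq> xs!c"
    using assms(1,5-7) by (simp_all add: nth_eq_iff_index_eq)
  have less: "ys!p < ys!q \<longleftrightarrow> xs!p < xs!q"
    if "p < length xs" "q < length xs" "{p,q} \<noteq> {lo,hi}" for p q
    unfolding ys_def using swap_adjacent_values_less_iff[OF assms(1) _ _ assms(4) that] assms(2,3)
    by simp
  have swapped: "ys!lo < ys!hi \<longleftrightarrow> xs!hi < xs!lo" "ys!hi < ys!lo \<longleftrightarrow> xs!lo < xs!hi"
    using assms(2-4) by (auto simp: ys_def nth_list_update)
  show ?thesis
    unfolding ys_def[symmetric] is_turn_iff_less[OF neq(1,2)] is_turn_iff_less[OF neq(3,4)]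
    using less[of a b] less[of c b] swapped assms(2,4-7)
    by (auto simp: insert_commute doubleton_eq_iff)
qed

text \<open>The change of \<open>turn_weight\<close> when the turn status of (a, b, c) is reversed.\<close>

definition flip_gain :: "nat list \<Rightarrow> nat \<Rightarrow> nat \<Rightarrow> nat \<Rightarrow> int" where
  "flip_gain xs a b c = (if is_turn xs a b c then -1 else 1) * 2^a * 2^(length xs - 1 - c)"

lemma turn_weight_swap_adjacent_values:
  assumes "distinct xs" "lo < hi" "hi < length xs"
    and "xs!hi = Suc (xs!lo) \<or> xs!lo = Suc (xs!hi)"
  shows "int (turn_weight (xs[lo := xs!hi, hi := xs!lo])) = int (turn_weight xs)
    + (\<Sum>a<lo. flip_gain xs a lo hi) + (\<Sum>c\<in>{hi<..<length xs}. flip_gain xs lo hi c)"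
proof -
  define n where "n = length xs"
  define ys where "ys = xs[lo := xs!hi, hi := xs!lo]"
  define T where "T = increasing_triples n"
  define L where "L = (\<lambda>a. (a,lo,hi)) ` {..<lo}"
  define R where "R = (\<lambda>c. (lo,hi,c)) ` {hi<..<n}"
  define w where "w = (\<lambda>zs (a,b,c). if is_turn zs a b c then (2::int)^a * 2^(n-1-c) else 0)"
  have weight: "int (turn_weight zs) = (\<Sum>t\<in>T. w zs t)" if "length zs = n" for zs
    unfolding turn_weight_def T_def w_def that of_nat_sum by (intro sum.cong refl) auto
  have LR: "L \<subseteq> T" "R \<subseteq> T" "L \<inter> R = {}"
    using assms(2,3) by (auto simp: L_def R_def T_def n_def increasing_triples_def)
  have restrict: "T \<inter> {t. t \<in> L \<or> t \<in> R} = L \<union> R"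
    using LR by blast
  have "w ys t = w xs t + (if t \<in> L \<union> R then (case t of (a,b,c) \<Rightarrow> flip_gain xs a b c) else 0)"
    if "t \<in> T" for t
  proof -
    from \<open>t \<in> T\<close> obtain a b c where t: "t = (a,b,c)" "a < b" "b < c" "c < n"
      by (cases t) (auto simp: T_def increasing_triples_def)
    then have "t \<in> L \<union> R \<longleftrightarrow> (a,b) = (lo,hi) \<or> (b,c) = (lo,hi)"
      by (auto simp: L_def R_def)
    then show ?thesis
      using is_turn_swap_adjacent_values[OF assms t(2,3)] t
      by (simp add: w_def ys_def flip_gain_def n_def)
  qed
  then have "(\<Sum>t\<in>T. w ys t) = (\<Sum>t\<in>T. w xs t) + (\<Sum>t\<in>L \<union> R. case t of (a,b,c) \<Rightarrow> flip_gain xs a b c)"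
    using LR finite_increasing_triples[of n]
    by (simp add: sum.distrib sum.If_cases restrict flip: T_def)
  also have "(\<Sum>t\<in>L \<union> R. case t of (a,b,c) \<Rightarrow> flip_gain xs a b c)
      = (\<Sum>a<lo. flip_gain xs a lo hi) + (\<Sum>c\<in>{hi<..<n}. flip_gain xs lo hi c)"
    using LR by (simp add: sum.union_disjoint L_def R_def sum.reindex inj_on_def)
  finally show ?thesis
    using weight[of xs] weight[of ys] by (simp add: ys_def n_def)
qed

lemma sum_pos_of_dominant_last:
  fixes d :: "nat \<Rightarrow> int"
  assumes "d m = 2^m * w" "0 < w" "\<And>i. i < m \<Longrightarrow> - (2^i * w) \<le> d i"
  shows "0 < (\<Sum>i\<le>m. d i)"
proof -
  have "(\<Sum>i<m. - (2^i * w)) \<le> (\<Sum>i<m. d i)"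
    by (rule sum_mono) (use assms(3) in auto)
  moreover have "(\<Sum>i<m. - (2^i * w)) = - ((2^m - 1) * w)"
    using power_diff_1_eq[of "2::int" m] by (simp add: sum_negf sum_distrib_right)
  ultimately show ?thesis
    using assms(1,2) by (simp add: lessThan_Suc_atMost[symmetric] algebra_simps)
qed

lemma flip_gain_ge: "- (2^a * 2^(length xs - 1 - c)) \<le> flip_gain xs a b c"
  by (simp add: flip_gain_def)

lemma sum_flip_gain_before_pos:
  assumes "0 < lo" "\<not> is_turn xs (lo-1) lo hi"
  shows "0 < (\<Sum>a<lo. flip_gain xs a lo hi)"
proof -
  obtain m where m: "lo = Suc m" using assms(1) gr0_implies_Suc by blast
  have "0 < (\<Sum>a\<le>m. flip_gain xs a lo hi)"
  proof (rule sum_pos_of_dominant_last[where w="2^(length xs - 1 - hi)"])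
    show "flip_gain xs m lo hi = 2^m * 2^(length xs - 1 - hi)"
      using assms(2) m by (simp add: flip_gain_def)
    show "- (2^i * 2^(length xs - 1 - hi)) \<le> flip_gain xs i lo hi" for i
      using flip_gain_ge[of i xs hi lo] by simp
  qed simp
  with m show ?thesis by (simp add: lessThan_Suc_atMost)
qed

lemma sum_flip_gain_after_pos:
  assumes "hi + 1 < length xs" "\<not> is_turn xs lo hi (hi+1)"
  shows "0 < (\<Sum>c\<in>{hi<..<length xs}. flip_gain xs lo hi c)"
proof -
  define n where "n = length xs"
  define m where "m = n - 2 - hi"
  have "(\<Sum>c\<in>{hi<..<n}. flip_gain xs lo hi c) = (\<Sum>i\<le>m. flip_gain xs lo hi (n-1-i))"
    by (rule sum.reindex_bij_witness[where i="\<lambda>i. n-1-i" and j="\<lambda>c. n-1-c"])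
      (use assms(1) in \<open>auto simp: m_def n_def\<close>)
  also have "0 < \<dots>"
  proof (rule sum_pos_of_dominant_last[where w="2^lo"])
    have "n-1-m = hi+1" "n-1-(hi+1) = m" using assms(1) by (auto simp: m_def n_def)
    then show "flip_gain xs lo hi (n-1-m) = 2^m * 2^lo"
      using assms(2) by (simp add: flip_gain_def n_def)
    show "- (2^i * 2^lo) \<le> flip_gain xs lo hi (n-1-i)" if "i < m" for i
    proof -
      have "n-1-(n-1-i) = i" using that assms(1) by (simp add: m_def n_def)
      then show ?thesis using flip_gain_ge[of lo xs "n-1-i" hi] by (simp add: mult.commute n_def)
    qed
  qed simp
  finally show ?thesis by (simp add: n_def)
qed

lemma turn_weight_less_swap_adjacent_values:
  assumes "distinct xs" "lo < hi" "hi < length xs"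
    and "xs!hi = Suc (xs!lo) \<or> xs!lo = Suc (xs!hi)"
    and "0 < lo \<Longrightarrow> \<not> is_turn xs (lo-1) lo hi"
    and "hi+1 < length xs \<Longrightarrow> \<not> is_turn xs lo hi (hi+1)"
    and "0 < lo \<or> hi+1 < length xs"
  shows "turn_weight xs < turn_weight (xs[lo := xs!hi, hi := xs!lo])"
proof -
  have left: "0 < (\<Sum>a<lo. flip_gain xs a lo hi)" if "0 < lo"
    using sum_flip_gain_before_pos that assms(5) by blast
  have right: "0 < (\<Sum>c\<in>{hi<..<length xs}. flip_gain xs lo hi c)" if "hi + 1 < length xs"
    using sum_flip_gain_after_pos that assms(6) by blast
  have "0 \<le> (\<Sum>a<lo. flip_gain xs a lo hi)"
    using left by (cases "lo = 0") auto
  moreover have "0 \<le> (\<Sum>c\<in>{hi<..<length xs}. flip_gain xs lo hi c)"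
  proof (cases "hi + 1 < length xs")
    case False
    then have "{hi<..<length xs} = {}" by auto
    then show ?thesis by simp
  qed (use right in auto)
  ultimately have "0 < (\<Sum>a<lo. flip_gain xs a lo hi) + (\<Sum>c\<in>{hi<..<length xs}. flip_gain xs lo hi c)"
    using left right assms(7) by fastforce
  then show ?thesis
    using turn_weight_swap_adjacent_values[OF assms(1-4)] by linarith
qed

section \<open>Maximizers with only peaks and valleys\<close>

lemma ordered_partition_atLeastLessThan:
  fixes A B :: "nat set"
  assumes AB: "A \<union> B = {l..<u}" and less: "\<forall>a\<in>A. \<forall>b\<in>B. a < b"
  shows "A = {l..<l + card A}" "B = {l + card A..<u}"
proof -
  define m where "m = card A"
  have "A \<subseteq> {l..<u}" using AB by blast
  then have fin: "finite A" by (rule finite_subset) simp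
  have "A \<subseteq> {l..<l + m}"
  proof
    fix x assume x: "x \<in> A"
    with \<open>A \<subseteq> {l..<u}\<close> have "x \<in> {l..<u}" by blast
    have "{l..x} \<subseteq> A"
    proof
      fix y assume y: "y \<in> {l..x}"
      with \<open>x \<in> {l..<u}\<close> have "y \<in> A \<union> B" unfolding AB by auto
      moreover have "y \<notin> B" using less x y by force
      ultimately show "y \<in> A" by blast
    qed
    then have "card {l..x} \<le> m" unfolding m_def using fin by (rule card_mono[rotated])
    then show "x \<in> {l..<l + m}" using \<open>x \<in> {l..<u}\<close> by simp
  qed
  moreover have "card A = card {l..<l + m}" by (simp add: m_def)
  ultimately have A: "A = {l..<l + m}" using card_subset_eq[OF finite_atLeastLessThan] by blast
  then show "A = {l..<l + card A}" by (simp only: m_def)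
  have "A \<inter> B = {}" using less by blast
  with AB have "B = {l..<u} - A" by blast
  also have "\<dots> = {l + m..<u}" using A by auto
  finally show "B = {l + card A..<u}" by (simp only: m_def)
qed

lemma length_of_Sn: "xs \<in> Sn n \<Longrightarrow> length xs = n"
  using distinct_card[of xs] by (simp add: Sn_def)

lemma finite_Sn: "finite (Sn n)"
proof -
  have "Sn n \<subseteq> {xs. set xs \<subseteq> {1..n} \<and> length xs = n}"
    using length_of_Sn by (auto simp: Sn_def)
  then show ?thesis
    by (rule finite_subset) (rule finite_lists_length_eq, simp)
qed

lemma swap_in_Sn:
  "xs \<in> Sn n \<Longrightarrow> i < n \<Longrightarrow> j < n \<Longrightarrow> xs[i := xs!j, j := xs!i] \<in> Sn n"
  using length_of_Sn by (auto simp: Sn_def)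

lemma tstat_le_of_RC: "xs \<in> RC n \<Longrightarrow> ys \<in> Sn n \<Longrightarrow> tstat ys \<le> tstat xs"
  using finite_Sn by (auto simp: RC_def)

lemma tstat_less_of_turn_weight_less:
  "length xs = length ys \<Longrightarrow> turn_weight xs < turn_weight ys \<Longrightarrow> tstat xs < tstat ys"
  by (simp add: tstat_eq_card_add_turn_weight)

definition is_valley :: "nat list \<Rightarrow> nat \<Rightarrow> bool" where
  "is_valley xs q \<longleftrightarrow> 0 < q \<and> q+1 < length xs \<and> xs!q < xs!(q-1) \<and> xs!q < xs!(q+1)"

definition is_peak :: "nat list \<Rightarrow> nat \<Rightarrow> bool" where
  "is_peak xs q \<longleftrightarrow> 0 < q \<and> q+1 < length xs \<and> xs!(q-1) < xs!q \<and> xs!(q+1) < xs!q"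

definition zigzag :: "nat list \<Rightarrow> bool" where
  "zigzag xs \<longleftrightarrow> (\<forall>q. 0 < q \<and> q+1 < length xs \<longrightarrow> is_valley xs q \<or> is_peak xs q)"

definition shape_rank :: "nat list \<Rightarrow> nat \<Rightarrow> nat" where
  "shape_rank xs q = (if is_valley xs q then 0 else if is_peak xs q then 2 else 1)"

lemma RC_no_improving_swap:
  assumes "xs \<in> RC n" "i < n" "j < n"
  shows "\<not> turn_weight xs < turn_weight (xs[i := xs!j, j := xs!i])"
proof
  assume "turn_weight xs < turn_weight (xs[i := xs!j, j := xs!i])"
  then have "tstat xs < tstat (xs[i := xs!j, j := xs!i])"
    by (simp add: tstat_less_of_turn_weight_less)
  moreover have "xs \<in> Sn n" using assms(1) by (simp add: RC_def)
  then have "xs[i := xs!j, j := xs!i] \<in> Sn n" using swap_in_Sn assms(2,3) by blast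
  ultimately show False using tstat_le_of_RC[OF assms(1)] by fastforce
qed

lemma RC_shape_rank_le_Suc:
  assumes RC: "xs \<in> RC n" and zz: "zigzag xs" and q: "q1 < n" "q2 < n" "xs!q2 = Suc (xs!q1)"
  shows "shape_rank xs q1 \<le> shape_rank xs q2"
proof (rule ccontr)
  assume rank: "\<not> shape_rank xs q1 \<le> shape_rank xs q2"
  have len: "length xs = n" and dist: "distinct xs"
    using RC length_of_Sn by (auto simp: RC_def Sn_def)
  have peak: "is_peak xs q1" if "0 < q1" "q1 + 1 < n"
    using zz rank that len by (auto simp: zigzag_def shape_rank_def split: if_splits)
  have valley: "is_valley xs q2" if "0 < q2" "q2 + 1 < n"
    using zz rank that len by (auto simp: zigzag_def shape_rank_def split: if_splits)
  have interior: "(0 < q1 \<and> q1 + 1 < n) \<or> (0 < q2 \<and> q2 + 1 < n)"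
  proof (rule ccontr)
    assume "\<not> ?thesis"
    then have "shape_rank xs q1 = 1" "shape_rank xs q2 = 1"
      using len by (auto simp: shape_rank_def is_valley_def is_peak_def)
    with rank show False by simp
  qed
  consider "q1 < q2" | "q2 < q1" using q(3) by (metis linorder_neqE_nat n_not_Suc_n)
  then show False
  proof cases
    case 1
    have "turn_weight xs < turn_weight (xs[q1 := xs!q2, q2 := xs!q1])"
    proof (rule turn_weight_less_swap_adjacent_values)
      show "\<not> is_turn xs (q1-1) q1 q2" if "0 < q1"
        using peak that 1 q by (intro not_is_turn_if_monotone) (simp add: is_peak_def)
      show "\<not> is_turn xs q1 q2 (q2+1)" if "q2 + 1 < length xs"
        using valley that 1 q len by (intro not_is_turn_if_monotone) (simp add: is_valley_def)
    qed (use dist len q 1 interior in auto)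
    then show False using RC_no_improving_swap[OF RC q(1,2)] by blast
  next
    case 2
    have "turn_weight xs < turn_weight (xs[q2 := xs!q1, q1 := xs!q2])"
    proof (rule turn_weight_less_swap_adjacent_values)
      show "\<not> is_turn xs (q2-1) q2 q1" if "0 < q2"
        using valley that 2 q by (intro not_is_turn_if_monotone) (simp add: is_valley_def)
      show "\<not> is_turn xs q2 q1 (q1+1)" if "q1 + 1 < length xs"
        using peak that 2 q len by (intro not_is_turn_if_monotone) (simp add: is_peak_def)
    qed (use dist len q 2 interior in auto)
    then show False using RC_no_improving_swap[OF RC q(2,1)] by blast
  qed
qed

lemma RC_shape_rank_mono:
  assumes RC: "xs \<in> RC n" and zz: "zigzag xs" and q: "q1 < n" "q2 < n" "xs!q1 < xs!q2"
  shows "shape_rank xs q1 \<le> shape_rank xs q2"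
proof -
  have len: "length xs = n" and vals: "set xs = {1..n}"
    using RC length_of_Sn by (auto simp: RC_def Sn_def)
  have "shape_rank xs q1 \<le> shape_rank xs q2"
    if "q1 < n" "q2 < n" "xs!q2 = xs!q1 + Suc d" for d q1 q2
    using that
  proof (induction d arbitrary: q2)
    case 0
    then show ?case using RC_shape_rank_le_Suc[OF RC zz] by simp
  next
    case (Suc d)
    have "xs!q1 + Suc d \<in> set xs"
      using Suc.prems nth_mem[of q1 xs] nth_mem[of q2 xs] len vals by auto
    then obtain q3 where q3: "q3 < n" "xs!q3 = xs!q1 + Suc d"
      using len by (auto simp: in_set_conv_nth)
    have "shape_rank xs q1 \<le> shape_rank xs q3" using Suc.IH[OF Suc.prems(1) q3] .
    also have "\<dots> \<le> shape_rank xs q2"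
      using RC_shape_rank_le_Suc[OF RC zz q3(1) Suc.prems(2)] Suc.prems q3 by simp
    finally show ?case .
  qed
  from this[of q1 q2 "xs!q2 - xs!q1 - 1"] q show ?thesis by simp
qed

lemma RC_less_of_shape_rank_less:
  assumes "xs \<in> RC n" "zigzag xs" "q1 < n" "q2 < n" "shape_rank xs q1 < shape_rank xs q2"
  shows "xs!q1 < xs!q2"
proof -
  have "length xs = n" "distinct xs"
    using assms(1) length_of_Sn by (auto simp: RC_def Sn_def)
  then have "xs!q1 \<noteq> xs!q2"
    using assms(3-5) by (auto simp: nth_eq_iff_index_eq)
  then show ?thesis
    using RC_shape_rank_mono[OF assms(1,2) assms(4,3)] assms(5) by fastforce
qed

lemma RC_zigzag_value_blocks:
  assumes RC: "xs \<in> RC n" and zz: "zigzag xs" and n: "2 \<le> n"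
  defines "V \<equiv> {q. is_valley xs q}" and "P \<equiv> {q. is_peak xs q}"
  shows "(!) xs ` V = {1..card V}" "{xs!0, xs!(n-1)} = {card V + 1, card V + 2}"
    "(!) xs ` P = {card V + 3..n}"
proof -
  have len: "length xs = n" and dist: "distinct xs" and vals: "set xs = {1..n}"
    using RC length_of_Sn by (auto simp: RC_def Sn_def)
  define E where "E = {0, n-1}"
  have rankV: "q < n \<and> shape_rank xs q = 0" if "q \<in> V" for q
    using that len by (auto simp: shape_rank_def V_def is_valley_def)
  have rankE: "q < n \<and> shape_rank xs q = 1" if "q \<in> E" for q
    using that len n by (auto simp: shape_rank_def E_def is_valley_def is_peak_def)
  have rankP: "q < n \<and> shape_rank xs q = 2" if "q \<in> P" for q
    using that len by (auto simp: shape_rank_def P_def is_valley_def is_peak_def)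
  have VEP: "V \<union> E \<union> P = {..<n}"
    using zz len n by (auto simp: zigzag_def V_def E_def P_def is_valley_def is_peak_def)
  have less: "xs!p < xs!q" if "p < n" "q < n" "shape_rank xs p < shape_rank xs q" for p q
    using RC_less_of_shape_rank_less[OF RC zz that] .
  have inj: "inj_on ((!) xs) S" if "S \<subseteq> {..<n}" for S
    using dist len that by (intro inj_on_nth) auto
  have "(!) xs ` V \<union> ((!) xs ` E \<union> (!) xs ` P) = (!) xs ` {..<n}"
    using VEP by (auto simp: image_Un)
  also have "\<dots> = set xs"
    using len by (auto simp: set_conv_nth)
  also have "\<dots> = {1..<n+1}"
    using vals by (simp add: atLeastLessThanSuc_atLeastAtMost)
  finally have all: "(!) xs ` V \<union> ((!) xs ` E \<union> (!) xs ` P) = {1..<n+1}" .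
  have "\<forall>a\<in>(!) xs ` V. \<forall>b\<in>(!) xs ` E \<union> (!) xs ` P. a < b"
    using rankV rankE rankP by (fastforce intro!: less)
  note split1 = ordered_partition_atLeastLessThan[OF all this]
  have cardV: "card ((!) xs ` V) = card V"
    using VEP by (intro card_image inj) auto
  have cardE: "card ((!) xs ` E) = 2"
    using dist len n by (simp add: E_def nth_eq_iff_index_eq)
  have "\<forall>a\<in>(!) xs ` E. \<forall>b\<in>(!) xs ` P. a < b"
    using rankV rankE rankP by (fastforce intro!: less)
  note split2 = ordered_partition_atLeastLessThan[OF split1(2) this]
  have "{1..<1 + card V} = {1..card V}" "{1 + card V..<1 + card V + 2} = {card V + 1, card V + 2}"
    "{1 + card V + 2..<n + 1} = {card V + 3..n}" by auto
  moreover have "(!) xs ` E = {xs!0, xs!(n-1)}" by (simp add: E_def)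
  ultimately show "(!) xs ` V = {1..card V}" "{xs!0, xs!(n-1)} = {card V + 1, card V + 2}"
      "(!) xs ` P = {card V + 3..n}"
    using split1(1) split2 unfolding cardV cardE by simp_all
qed

section \<open>Alternating maximizers\<close>

lemma alternating_shape:
  assumes "alternating xs" "0 < q" "q + 1 < length xs"
  shows "if even q then is_valley xs q else is_peak xs q"
proof -
  have "even (q-1) \<longleftrightarrow> odd q" using assms(2) by (cases q) auto
  then show ?thesis
    using assms(1)[unfolded alternating_def, rule_format, of "q-1"]
      assms(1)[unfolded alternating_def, rule_format, of q] assms(2,3)
    by (auto simp: is_valley_def is_peak_def split: if_splits)
qed

lemma rev_alternating_shape:
  assumes "rev_alternating xs" "0 < q" "q + 1 < length xs"
  shows "if even q then is_peak xs q else is_valley xs q"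
proof -
  have "even (q-1) \<longleftrightarrow> odd q" using assms(2) by (cases q) auto
  then show ?thesis
    using assms(1)[unfolded rev_alternating_def, rule_format, of "q-1"]
      assms(1)[unfolded rev_alternating_def, rule_format, of q] assms(2,3)
    by (auto simp: is_valley_def is_peak_def split: if_splits)
qed

lemma card_interior_parity:
  "card {q. 0 < q \<and> q + 1 < n \<and> odd q = b} = (if b then (n - 1) div 2 else (n - 2) div 2)"
proof (induction n)
  case (Suc n)
  have fin: "finite {q. 0 < q \<and> q + 1 < n \<and> odd q = b}"
    by (rule finite_subset[of _ "{..<n}"]) auto
  show ?case
  proof (cases "0 < n - 1 \<and> odd (n - 1) = b")
    case True
    then have "{q. 0 < q \<and> q + 1 < Suc n \<and> odd q = b}
        = insert (n - 1) {q. 0 < q \<and> q + 1 < n \<and> odd q = b}"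
      by auto
    with fin Suc.IH True show ?thesis by (cases b; simp; presburger)
  next
    case False
    then have "{q. 0 < q \<and> q + 1 < Suc n \<and> odd q = b}
        = {q. 0 < q \<and> q + 1 < n \<and> odd q = b}"
      by (auto simp: less_Suc_eq)
    with Suc.IH False show ?thesis by (cases b; simp; presburger)
  qed
qed simp

lemma interior_values_shift:
  "{xs!(j-1) | j. 1 < j \<and> j < n \<and> P j} = (!) xs ` {q. 0 < q \<and> q + 1 < n \<and> P (q + 1)}"
proof (intro equalityI subsetI)
  fix v assume "v \<in> {xs!(j-1) | j. 1 < j \<and> j < n \<and> P j}"
  then obtain j where "v = xs!(j-1)" "1 < j" "j < n" "P j" by blast
  then show "v \<in> (!) xs ` {q. 0 < q \<and> q + 1 < n \<and> P (q + 1)}"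
    by (intro image_eqI[where x="j-1"]) auto
next
  fix v assume "v \<in> (!) xs ` {q. 0 < q \<and> q + 1 < n \<and> P (q + 1)}"
  then obtain q where "v = xs!q" "0 < q" "q + 1 < n" "P (q + 1)" by blast
  then show "v \<in> {xs!(j-1) | j. 1 < j \<and> j < n \<and> P j}"
    by (intro CollectI exI[where x="q+1"]) auto
qed

lemma RC_zigzag_values_by_parity:
  assumes RC: "xs \<in> RC n" and n: "2 \<le> n"
    and shape: "\<And>q. 0 < q \<Longrightarrow> q + 1 < length xs \<Longrightarrow> if odd q = b then is_valley xs q else is_peak xs q"
  defines "m \<equiv> if b then (n - 1) div 2 else (n - 2) div 2"
  shows "{xs!0, xs!(n-1)} = {m + 1, m + 2}"
    "{xs!(j-1) | j. 1 < j \<and> j < n \<and> even j = b} = {1..m}"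
    "{xs!(j-1) | j. 1 < j \<and> j < n \<and> even j \<noteq> b} = {m + 3..n}"
proof -
  have len: "length xs = n" using RC length_of_Sn by (simp add: RC_def)
  have V: "{q. is_valley xs q} = {q. 0 < q \<and> q + 1 < n \<and> odd q = b}"
    and P: "{q. is_peak xs q} = {q. 0 < q \<and> q + 1 < n \<and> odd q \<noteq> b}"
    and zz: "zigzag xs"
    using shape len by (fastforce simp: zigzag_def is_valley_def is_peak_def split: if_splits)+
  note blocks =
    RC_zigzag_value_blocks[OF RC zz n, unfolded V P card_interior_parity m_def[symmetric]]
  show "{xs!0, xs!(n-1)} = {m + 1, m + 2}"
    "{xs!(j-1) | j. 1 < j \<and> j < n \<and> even j = b} = {1..m}"
    "{xs!(j-1) | j. 1 < j \<and> j < n \<and> even j \<noteq> b} = {m + 3..n}"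
    using blocks unfolding interior_values_shift by simp_all
qed

lemma RC_alternating_values:
  assumes "xs \<in> RC n" "2 \<le> n" "alternating xs"
  shows "{xs!0, xs!(n-1)} = {(n-2) div 2 + 1, (n-2) div 2 + 2}"
    "{xs!(j-1) | j. 1 < j \<and> j < n \<and> odd j} = {1..(n-2) div 2}"
    "{xs!(j-1) | j. 1 < j \<and> j < n \<and> even j} = {(n-2) div 2 + 3..n}"
  using RC_zigzag_values_by_parity[OF assms(1,2), of False] alternating_shape[OF assms(3)]
  by simp_all

lemma RC_rev_alternating_values:
  assumes "xs \<in> RC n" "2 \<le> n" "rev_alternating xs"
  shows "{xs!0, xs!(n-1)} = {(n-1) div 2 + 1, (n-1) div 2 + 2}"
    "{xs!(j-1) | j. 1 < j \<and> j < n \<and> odd j} = {(n-1) div 2 + 3..n}"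
    "{xs!(j-1) | j. 1 < j \<and> j < n \<and> even j} = {1..(n-1) div 2}"
  using RC_zigzag_values_by_parity[OF assms(1,2), of True] rev_alternating_shape[OF assms(3)]
  by simp_all

theorem mainTheorem4:
  fixes n :: nat and xs :: "nat list"
  defines "p \<equiv> \<lambda>j. xs ! (j - 1)"
  assumes "xs \<in> RC n"
  shows
   "(n \<ge> 3 \<and> odd n \<and> alternating xs \<longrightarrow>
       {p 1, p n} = {(n-1) div 2, (n+1) div 2} \<and>
       {p j | j. 1 < j \<and> j < n \<and> odd j} = {1..(n-3) div 2} \<and>
       {p j | j. 1 < j \<and> j < n \<and> even j} = {(n+3) div 2..n}) \<and>
    (n \<ge> 3 \<and> odd n \<and> rev_alternating xs \<longrightarrow>
       {p 1, p n} = {(n+1) div 2, (n+3) div 2} \<and>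
       {p j | j. 1 < j \<and> j < n \<and> odd j} = {(n+5) div 2..n} \<and>
       {p j | j. 1 < j \<and> j < n \<and> even j} = {1..(n-1) div 2}) \<and>
    (n \<ge> 2 \<and> even n \<and> alternating xs \<longrightarrow>
       {p 1, p n} = {n div 2, n div 2 + 1} \<and>
       {p j | j. 1 < j \<and> j < n \<and> odd j} = {1..n div 2 - 1} \<and>
       {p j | j. 1 < j \<and> j < n \<and> even j} = {n div 2 + 2..n}) \<and>
    (n \<ge> 2 \<and> even n \<and> rev_alternating xs \<longrightarrow>
       {p 1, p n} = {n div 2, n div 2 + 1} \<and>
       {p j | j. 1 < j \<and> j < n \<and> odd j} = {n div 2 + 2..n} \<and>
       {p j | j. 1 < j \<and> j < n \<and> even j} = {1..n div 2 - 1})"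
proof -
  note alt = RC_alternating_values[OF assms(2), simplified]
    and rev_alt = RC_rev_alternating_values[OF assms(2), simplified]
  have ends: "{p 1, p n} = {xs!0, xs!(n-1)}"
    and inner: "\<And>P. {p j | j. 1 < j \<and> j < n \<and> P j} = {xs!(j-1) | j. 1 < j \<and> j < n \<and> P j}"
    by (simp_all add: p_def)
  have half: "2 \<le> n \<Longrightarrow> 0 < n div 2" by simp
  show ?thesis
  proof (cases "even n")
    case True
    then have "(n-2) div 2 = n div 2 - 1" "(n-1) div 2 = n div 2 - 1" by presburger+
    with True half show ?thesis
      unfolding ends inner by (intro conjI impI; elim conjE; simp add: alt rev_alt)
  next
    case False
    then have "(n-2) div 2 = n div 2 - 1" "(n-1) div 2 = n div 2" "(n-3) div 2 = n div 2 - 1"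
      "(n+1) div 2 = n div 2 + 1" "(n+3) div 2 = n div 2 + 2" "(n+5) div 2 = n div 2 + 3" by presburger+
    with False half show ?thesis
      unfolding ends inner by (intro conjI impI; elim conjE; simp add: alt rev_alt)
  qed
qed

end
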